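(* Let $R>r>0$, $\Omega=B_R\setminus\overline{B_r}$, $q=\frac1{2r}-\frac1{2R}$, and let $\varphi\in L^2_0(\partial\Omega)$. Then $$PU(\mathcal{K}^*_{\partial\Omega}[\varphi])(k)=\frac12e^{-|k|q}\begin{bmatrix}-1&0\\0&1\end{bmatrix}P\,(U\varphi)(k)\quad\text{for a.e. } k\in\mathbb{R}.$$
   Context: Identify $\mathbb{R}^2$ with $\mathbb{C}$ and let $\Psi(z)=1/z$. For $a\in\mathbb{R}\setminus\{0\}$, $B_a$ is the open disk of radius $|a|$ centered at $(a,0)$. $\Psi$ maps $\partial B_R\setminus\{0\}$ onto the line $\{x=\frac1{2R}\}$ and $\partial B_r\setminus\{0\}$ onto $\{x=\frac1{2r}\}$. For $a>0$ let $h_a(y)=1/((2a)^{-2}+y^2)$. For a function $\varphi$ on $\partial\Omega=\partial B_R\cup\partial B_r$ put $\varphi_R(t)=\varphi(\Psi(\frac1{2R},t))$, $\varphi_r(t)=\varphi(\Psi(\frac1{2r},t))$, $t\in\mathbb{R}$; arclength is $d\sigma=h_R(t)dt$ on $\partial B_R$ and $h_r(t)dt$ on $\partial B_r$. $L^2_0(\partial\Omega)=\{\varphi\in L^2(\partial\Omega,d\sigma):\int_{\partial\Omega}\varphi\,d\sigma=0\}$. Fourier transform: $\mathcal{F}(g)(k)=\frac1{\sqrt{2\pi}}\int_{\mathbb{R}}g(y)e^{-iky}dy$; $U\varphi=(\mathcal{F}(h_R\varphi_R),\mathcal{F}(h_r\varphi_r))^T$; $P=\frac1{\sqrt2}\begin{bmatrix}-1&1\\1&1\end{bmatrix}$.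 The Neumann–Poincaré operator on $\partial\Omega$ (normal $\nu$ outward from $\Omega$: outward from $B_R$ on $\partial B_R$, into $B_r$ on $\partial B_r$) is given for $\varphi\in L^2(\partial\Omega)$ by $$\mathcal{K}^*_{\partial\Omega}[\varphi](\Psi(\tfrac1{2R},y))=\frac1{4\pi R}\int_{\partial\Omega}\varphi\,d\sigma+\frac1{2\pi h_R(y)}\int_{\mathbb{R}}\frac{q}{q^2+(y-t)^2}\varphi_r(t)h_r(t)\,dt,$$ $$\mathcal{K}^*_{\partial\Omega}[\varphi](\Psi(\tfrac1{2r},y))=-\frac1{4\pi r}\int_{\partial\Omega}\varphi\,d\sigma+\frac1{2\pi h_r(y)}\int_{\mathbb{R}}\frac{q}{q^2+(y-t)^2}\varphi_R(t)h_R(t)\,dt.$$ (This is $\mathcal{K}^*_{\partial B_R}[\varphi_R]+\partial_\nu\mathcal{S}_{\partial B_r}[\varphi_r]$ on $\partial B_R$ and $\partial_\nu\mathcal{S}_{\partial B_R}[\varphi_R]+\mathcal{K}^*_{\partial B_r}[\varphi_r]$ on $\partial B_r$, where $\mathcal{S}_{\partial B}[\psi](x)=\frac1{2\pi}\int_{\partial B}\ln|x-y|\psi(y)d\sigma(y)$.) *)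

theory Defs
  imports "HOL-Analysis.Analysis"
begin

definition Psi :: "real \<Rightarrow> real \<Rightarrow> complex" where
  "Psi x t = inverse (Complex x t)"

definition circ :: "real \<Rightarrow> complex set" where
  "circ a = sphere (complex_of_real a) \<bar>a\<bar>"

definition hfun :: "real \<Rightarrow> real \<Rightarrow> real" where
  "hfun a y = 1 / ((2 * a) powi (-2) + y ^ 2)"

definition pull :: "real \<Rightarrow> (complex \<Rightarrow> complex) \<Rightarrow> real \<Rightarrow> complex" where
  "pull a \<phi> t = \<phi> (Psi (1 / (2 * a)) t)"

text \<open>Membership in L^2(d sigma) on dB_R \<union> dB_r, with d sigma = h_R dt resp. h_r dt.\<close>
definition L2_bdry :: "real \<Rightarrow> real \<Rightarrow> (complex \<Rightarrow> complex) \<Rightarrow> bool" where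
  "L2_bdry R r \<phi> \<longleftrightarrow>
     pull R \<phi> \<in> borel_measurable lborel \<and> pull r \<phi> \<in> borel_measurable lborel \<and>
     integrable lborel (\<lambda>t. (cmod (pull R \<phi> t))\<^sup>2 * hfun R t) \<and>
     integrable lborel (\<lambda>t. (cmod (pull r \<phi> t))\<^sup>2 * hfun r t)"

text \<open>Integral over dOmega with respect to arclength.\<close>
definition bdry_int :: "real \<Rightarrow> real \<Rightarrow> (complex \<Rightarrow> complex) \<Rightarrow> complex" where
  "bdry_int R r \<phi> =
     (LINT t|lborel. pull R \<phi> t * complex_of_real (hfun R t)) +
     (LINT t|lborel. pull r \<phi> t * complex_of_real (hfun r t))"

definition L2_0_bdry :: "real \<Rightarrow> real \<Rightarrow> (complex \<Rightarrow> complex) \<Rightarrow> bool" where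
  "L2_0_bdry R r \<phi> \<longleftrightarrow> L2_bdry R r \<phi> \<and> bdry_int R r \<phi> = 0"

text \<open>Neumann--Poincare operator on dOmega, via the given formulas
  (q = 1/(2r) - 1/(2R)); the value at 0 and off dOmega is irrelevant (set to 0).\<close>
definition Kstar :: "real \<Rightarrow> real \<Rightarrow> (complex \<Rightarrow> complex) \<Rightarrow> complex \<Rightarrow> complex" where
  "Kstar R r \<phi> z =
    (let q = 1 / (2 * r) - 1 / (2 * R); y = Im (inverse z) in
     if z \<in> circ R - {0} then
       complex_of_real (1 / (4 * pi * R)) * bdry_int R r \<phi> +
       complex_of_real (1 / (2 * pi * hfun R y)) *
         (LINT t|lborel. complex_of_real (q / (q\<^sup>2 + (y - t)\<^sup>2)) * pull r \<phi> t
                           * complex_of_real (hfun r t))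
     else if z \<in> circ r - {0} then
       - complex_of_real (1 / (4 * pi * r)) * bdry_int R r \<phi> +
       complex_of_real (1 / (2 * pi * hfun r y)) *
         (LINT t|lborel. complex_of_real (q / (q\<^sup>2 + (y - t)\<^sup>2)) * pull R \<phi> t
                           * complex_of_real (hfun R t))
     else 0)"

definition fourier :: "(real \<Rightarrow> complex) \<Rightarrow> real \<Rightarrow> complex" where
  "fourier g k = complex_of_real (1 / sqrt (2 * pi)) *
     (LINT y|lborel. g y * exp (- \<i> * complex_of_real (k * y)))"

definition Uop :: "real \<Rightarrow> real \<Rightarrow> (complex \<Rightarrow> complex) \<Rightarrow> real \<Rightarrow> complex ^ 2" where
  "Uop R r \<phi> k = vector
     [fourier (\<lambda>t. complex_of_real (hfun R t) * pull R \<phi> t) k,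
      fourier (\<lambda>t. complex_of_real (hfun r t) * pull r \<phi> t) k]"

definition Pmat :: "complex ^ 2 ^ 2" where
  "Pmat = (1 / sqrt 2) *\<^sub>R vector [vector [-1, 1], vector [1, 1]]"

definition Jmat :: "complex ^ 2 ^ 2" where
  "Jmat = vector [vector [-1, 0], vector [0, 1]]"

end

theory Submission
  imports Defs "HOL-Probability.Sinc_Integral"
begin

(* Under Psi(z) = 1/z the circles dB_R and dB_r become the vertical lines x = 1/(2R) and
   x = 1/(2r), at distance q. For phi in L^2_0 the mean-value terms of K* vanish, and in terms
   of the weighted pull-backs g_R = h_R phi_R and g_r = h_r phi_r what remains of K* exchanges
   g_R and g_r and convolves each with P_q / (2 pi), where P_q(x) = q / (q^2 + x^2) is the
   Poisson kernel. Since the Fourier integral of P_q is pi e^(-q|k|), the transform of K* phi is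
   (1/2) e^(-q|k|) times the swap of the two components of U phi, and P conjugates the swap
   into the diagonal matrix J. In particular the identity holds for every k.

   The transform of P_q comes from the elementary integral of e^(-a|s|) e^(ibs), which is
   2 P_a(b): inserting a damping factor e^(-eps|x|) makes Fubini's theorem applicable, and the
   damped identity converges as eps -> 0 because the rescaled Cauchy density is an
   approximate identity. *)

section \<open>The Poisson kernel of the half-plane\<close>

lemma lborel_integrable_inverse_1_plus_square: "integrable lborel (\<lambda>x::real. inverse (1 + x\<^sup>2))"
  using integrable_inverse_1_plus_square by (simp add: set_integrable_def)

lemma lborel_integral_inverse_1_plus_square: "(LINT x|lborel. inverse (1 + x\<^sup>2)) = pi"
  using LBINT_inverse_1_plus_square
  by (simp add: interval_lebesgue_integral_def set_lebesgue_integral_def)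

definition poisson_kernel :: "real \<Rightarrow> real \<Rightarrow> real" where
  "poisson_kernel q x = q / (q\<^sup>2 + x\<^sup>2)"

lemma poisson_kernel_measurable [measurable]: "poisson_kernel q \<in> borel_measurable borel"
  unfolding poisson_kernel_def by measurable

lemma poisson_kernel_pos: "q > 0 \<Longrightarrow> poisson_kernel q x > 0"
  unfolding poisson_kernel_def by (intro divide_pos_pos add_pos_nonneg) auto

lemma poisson_kernel_scaled: "q > 0 \<Longrightarrow> poisson_kernel q (q * u) = inverse (1 + u\<^sup>2) / q"
proof -
  assume "q > 0"
  have "q\<^sup>2 + (q * u)\<^sup>2 = q * (q * (1 + u\<^sup>2))" by algebra
  with \<open>q > 0\<close> show ?thesis by (simp add: poisson_kernel_def divide_inverse)
qed

lemma
  assumes "q > 0"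
  shows integrable_poisson_kernel_shift: "integrable lborel (\<lambda>y. poisson_kernel q (y - t))"
    and integral_poisson_kernel_shift: "(LINT y|lborel. poisson_kernel q (y - t)) = pi"
proof -
  have "integrable lborel (\<lambda>u. poisson_kernel q (q * u))"
    using assms lborel_integrable_inverse_1_plus_square by (simp add: poisson_kernel_scaled)
  then show "integrable lborel (\<lambda>y. poisson_kernel q (y - t))"
    using assms lborel_integrable_real_affine_iff[of q "\<lambda>y. poisson_kernel q (y - t)" t] by simp
  have "(LINT y|lborel. poisson_kernel q (y - t)) = q * (LINT u|lborel. poisson_kernel q (q * u))"
    using assms lborel_integral_real_affine[of q "\<lambda>y. poisson_kernel q (y - t)" t] by simp
  also have "\<dots> = pi"
    using assms lborel_integral_inverse_1_plus_square by (simp add: poisson_kernel_scaled)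
  finally show "(LINT y|lborel. poisson_kernel q (y - t)) = pi" .
qed

section \<open>The Fourier integral of the Poisson kernel\<close>

lemma exp_neg_abs_le_inverse_1_plus_square:
  fixes a x :: real assumes "a > 0"
  shows "exp (- a * \<bar>x\<bar>) \<le> inverse (1 + x\<^sup>2) / min 1 (a\<^sup>2 / 2)"
proof -
  define m where "m = min 1 (a\<^sup>2 / 2)"
  have "m > 0" using assms by (simp add: m_def)
  have "m * x\<^sup>2 \<le> a\<^sup>2 / 2 * x\<^sup>2"
    by (intro mult_right_mono) (auto simp: m_def)
  moreover have "m \<le> 1" by (simp add: m_def)
  ultimately have "m * (1 + x\<^sup>2) \<le> 1 + (a * \<bar>x\<bar>)\<^sup>2 / 2"
    by (simp add: power_mult_distrib algebra_simps)
  also have "\<dots> \<le> exp (a * \<bar>x\<bar>)"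
    using exp_lower_Taylor_quadratic[of "a * \<bar>x\<bar>"] assms
    by (smt (verit) mult_nonneg_nonneg abs_ge_zero)
  finally have "m * (1 + x\<^sup>2) \<le> exp (a * \<bar>x\<bar>)" .
  moreover have "0 < m * (1 + x\<^sup>2)"
    using \<open>m > 0\<close> by (simp add: add_pos_nonneg)
  ultimately have "inverse (exp (a * \<bar>x\<bar>)) \<le> inverse (m * (1 + x\<^sup>2))"
    by (rule le_imp_inverse_le)
  also have "inverse (m * (1 + x\<^sup>2)) = inverse (1 + x\<^sup>2) / m"
    by (simp add: divide_inverse)
  finally show ?thesis
    by (simp add: exp_minus m_def)
qed

lemma integrable_exp_neg_abs:
  fixes a :: real assumes "a > 0"
  shows "integrable lborel (\<lambda>x. exp (- a * \<bar>x\<bar>))"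
proof (rule Bochner_Integration.integrable_bound)
  show "integrable lborel (\<lambda>x. inverse (1 + x\<^sup>2) / min 1 (a\<^sup>2 / 2))"
    using lborel_integrable_inverse_1_plus_square by simp
  show "AE x in lborel. norm (exp (- a * \<bar>x\<bar>)) \<le> norm (inverse (1 + x\<^sup>2) / min 1 (a\<^sup>2 / 2))"
    using exp_neg_abs_le_inverse_1_plus_square[OF assms] by (auto simp: add_pos_nonneg)
qed simp

lemma integrable_exp_neg_abs_cis:
  "(a::real) > 0 \<Longrightarrow> integrable lborel (\<lambda>x. of_real (exp (- a * \<bar>x\<bar>)) * exp (\<i> * of_real (b * x)))"
  by (rule Bochner_Integration.integrable_bound[OF integrable_exp_neg_abs])
     (auto simp: norm_mult)

lemma set_integrable_exp_0_infty:
  fixes c :: complex assumes "Re c < 0"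
  shows "set_integrable lborel (einterval 0 \<infinity>) (\<lambda>x. exp (c * of_real x))"
proof -
  have "integrable lborel (\<lambda>x. exp (Re c * \<bar>x\<bar>))"
    using integrable_exp_neg_abs[of "- Re c"] assms by simp
  then have "set_integrable lborel (einterval 0 \<infinity>) (\<lambda>x. exp (Re c * \<bar>x\<bar>))"
    unfolding set_integrable_def by (rule integrable_mult_indicator[rotated]) simp
  then show ?thesis
  proof (rule set_integrable_bound)
    show "set_borel_measurable lborel (einterval 0 \<infinity>) (\<lambda>x. exp (c * of_real x))"
      using set_measurable_continuous_on[of "einterval 0 \<infinity>" "\<lambda>x. exp (c * of_real x)"]
      by (simp add: set_borel_measurable_def continuous_intros)
    show "AE x in lborel. x \<in> einterval 0 \<infinity> \<longrightarrow> norm (exp (c * of_real x)) \<le> norm (exp (Re c * \<bar>x\<bar>))"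
      by (intro AE_I2) (simp add: einterval_iff)
  qed
qed

lemma LBINT_exp_0_infty:
  fixes c :: complex assumes "Re c < 0"
  shows "(LBINT x=0..\<infinity>. exp (c * of_real x)) = - 1 / c"
proof -
  have "c \<noteq> 0" using assms by auto
  have "(LBINT x=0..\<infinity>. exp (c * of_real x)) = 0 - 1 / c"
  proof (rule interval_integral_FTC_integrable[where F = "\<lambda>x. exp (c * of_real x) / c"])
    show "((\<lambda>x. exp (c * of_real x) / c) has_vector_derivative exp (c * of_real x)) (at x)" for x
    proof -
      have "((\<lambda>z. exp (c * z) / c) has_field_derivative exp (c * of_real x)) (at (of_real x))"
        using \<open>c \<noteq> 0\<close> by (auto intro!: derivative_eq_intros)
      then show ?thesis by (rule has_vector_derivative_real_field)
    qed
    show "set_integrable lborel (einterval 0 \<infinity>) (\<lambda>x. exp (c * of_real x))"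
      using assms by (rule set_integrable_exp_0_infty)
    have "isCont (\<lambda>x. exp (c * of_real x) / c) 0"
      using \<open>c \<noteq> 0\<close> by (intro continuous_intros)
    then have "((\<lambda>x. exp (c * of_real x) / c) \<longlongrightarrow> exp (c * of_real 0) / c) (at_right 0)"
      unfolding isCont_def by (rule tendsto_mono[OF at_le, rotated]) simp
    then show "(((\<lambda>x. exp (c * of_real x) / c) \<circ> real_of_ereal) \<longlongrightarrow> 1 / c) (at_right 0)"
      unfolding zero_ereal_def ereal_tendsto_simps by simp
    have "filterlim (\<lambda>x. Re c * x) at_bot at_top"
      by (rule filterlim_tendsto_neg_mult_at_bot[OF tendsto_const assms filterlim_ident])
    then have "((\<lambda>x. exp (Re c * x) / cmod c) \<longlongrightarrow> 0) at_top"
      by (intro tendsto_divide_zero filterlim_compose[OF exp_at_bot])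
    then show "(((\<lambda>x. exp (c * of_real x) / c) \<circ> real_of_ereal) \<longlongrightarrow> 0) (at_left \<infinity>)"
      unfolding ereal_tendsto_simps
      by - (rule tendsto_norm_zero_cancel, simp add: norm_divide)
  qed (use \<open>c \<noteq> 0\<close> in auto)
  then show ?thesis by simp
qed

lemma integral_exp_neg_abs_cis:
  fixes a b :: real assumes "a > 0"
  shows "(LINT x|lborel. of_real (exp (- a * \<bar>x\<bar>)) * exp (\<i> * of_real (b * x)))
    = of_real (2 * poisson_kernel a b)"
proof -
  define f where "f x = of_real (exp (- a * \<bar>x\<bar>)) * exp (\<i> * of_real (b * x))" for x
  have f_pos: "f x = exp (Complex (- a) b * of_real x)" if "x > 0" for x
    using that by (simp add: f_def Complex_eq exp_of_real[symmetric] algebra_simps flip: exp_add)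
  have f_neg: "f (- x) = exp (Complex (- a) (- b) * of_real x)" if "x > 0" for x
    using that by (simp add: f_def Complex_eq exp_of_real[symmetric] algebra_simps flip: exp_add)
  have "interval_lebesgue_integrable lborel (-\<infinity>) \<infinity> f"
    using integrable_exp_neg_abs_cis[OF assms, of b]
    by (simp add: f_def interval_lebesgue_integrable_def set_integrable_def)
  then have "(LBINT x=-\<infinity>..\<infinity>. f x) = (LBINT x=-\<infinity>..0. f x) + (LBINT x=0..\<infinity>. f x)"
    by (intro interval_integral_sum[symmetric]) simp
  then have "(LINT x|lborel. f x) = (LBINT x=-\<infinity>..0. f x) + (LBINT x=0..\<infinity>. f x)"
    by (simp add: interval_lebesgue_integral_def set_lebesgue_integral_def)
  also have "(LBINT x=-\<infinity>..0. f x) = (LBINT x=0..\<infinity>. exp (Complex (- a) (- b) * of_real x))"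
    by (subst interval_integral_reflect) (auto intro!: interval_integral_cong simp: einterval_iff f_neg)
  also have "(LBINT x=0..\<infinity>. f x) = (LBINT x=0..\<infinity>. exp (Complex (- a) b * of_real x))"
    by (auto intro!: interval_integral_cong simp: einterval_iff f_pos)
  also have "(LBINT x=0..\<infinity>. exp (Complex (- a) (- b) * of_real x)) + (LBINT x=0..\<infinity>. exp (Complex (- a) b * of_real x))
      = - 1 / Complex (- a) (- b) - 1 / Complex (- a) b"
    using assms by (simp add: LBINT_exp_0_infty)
  also have "\<dots> = of_real (2 * poisson_kernel a b)"
    using assms by (simp add: poisson_kernel_def complex_eq_iff Re_divide Im_divide field_simps add_pos_nonneg power2_eq_square)
  finally show ?thesis by (simp add: f_def)
qed

lemma lborel_pair_integrable_product_bound: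
  fixes H :: "real \<times> real \<Rightarrow> 'a::{banach, second_countable_topology}" and f g :: "real \<Rightarrow> real"
  assumes "H \<in> borel_measurable (lborel \<Otimes>\<^sub>M lborel)" and "integrable lborel f" and "integrable lborel g"
    and "\<And>x y. norm (H (x, y)) \<le> f x * g y"
  shows "integrable (lborel \<Otimes>\<^sub>M lborel) H"
proof (rule Bochner_Integration.integrable_bound)
  have [measurable]: "f \<in> borel_measurable borel" "g \<in> borel_measurable borel"
    using assms(2,3) by (simp_all add: borel_measurable_integrable)
  show "integrable (lborel \<Otimes>\<^sub>M lborel) (\<lambda>(x, y). f x * g y)"
  proof (rule lborel_pair.Fubini_integrable)
    show "(\<lambda>(x, y). f x * g y) \<in> borel_measurable (lborel \<Otimes>\<^sub>M lborel)"
      by measurable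
    show "integrable lborel (\<lambda>x. LINT y|lborel. norm (case (x, y) of (x, y) \<Rightarrow> f x * g y))"
      using assms(2) by (simp add: abs_mult)
    show "AE x in lborel. integrable lborel (\<lambda>y. case (x, y) of (x, y) \<Rightarrow> f x * g y)"
      using assms(3) by simp
  qed
  show "AE p in lborel \<Otimes>\<^sub>M lborel. norm (H p) \<le> norm (case p of (x, y) \<Rightarrow> f x * g y)"
    by (intro AE_I2) (auto intro: order_trans[OF assms(4)] split: prod.split)
qed fact

lemma Fourier_integral_poisson_kernel_damped:
  fixes q \<epsilon> k :: real assumes q: "q > 0" and \<epsilon>: "\<epsilon> > 0"
  shows "(LINT x|lborel. of_real (poisson_kernel q x) * exp (- \<i> * of_real (k * x)) * of_real (exp (- \<epsilon> * \<bar>x\<bar>)))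
    = of_real (LINT u|lborel. exp (- q * \<bar>k + \<epsilon> * u\<bar>) * inverse (1 + u\<^sup>2))"
proof -
  \<comment> \<open>By \<open>integral_exp_neg_abs_cis\<close>, integrating \<open>H x s\<close> over \<open>s\<close> gives the left-hand integrand;
      the damping factor is what makes \<open>H\<close> integrable on the plane.\<close>
  define H where "H x s = of_real (exp (- q * \<bar>s\<bar>) * exp (- \<epsilon> * \<bar>x\<bar>) / 2) * exp (\<i> * of_real ((s - k) * x))"
    for x s
  have H_x: "H x s = of_real (exp (- q * \<bar>s\<bar>)) * exp (\<i> * of_real (x * s))
      * (of_real (exp (- \<epsilon> * \<bar>x\<bar>) / 2) * exp (- \<i> * of_real (k * x)))" for x s
  proof -
    have "exp (\<i> * of_real ((s - k) * x)) = exp (\<i> * of_real (x * s)) * exp (- \<i> * of_real (k * x))"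
      by (simp add: algebra_simps flip: exp_add)
    then show ?thesis by (simp add: H_def mult_ac)
  qed
  have H_s: "H x s = of_real (exp (- q * \<bar>s\<bar>) / 2)
      * (of_real (exp (- \<epsilon> * \<bar>x\<bar>)) * exp (\<i> * of_real ((s - k) * x)))" for x s
    by (simp add: H_def)
  have H_integrable: "integrable (lborel \<Otimes>\<^sub>M lborel) (\<lambda>(x, s). H x s)"
    by (rule lborel_pair_integrable_product_bound[where f = "\<lambda>x. exp (- \<epsilon> * \<bar>x\<bar>) / 2"
          and g = "\<lambda>s. exp (- q * \<bar>s\<bar>)"])
       (use integrable_exp_neg_abs[OF \<epsilon>] integrable_exp_neg_abs[OF q] in \<open>simp_all add: H_def norm_mult\<close>)
  have "(LINT x|lborel. of_real (poisson_kernel q x) * exp (- \<i> * of_real (k * x)) * of_real (exp (- \<epsilon> * \<bar>x\<bar>)))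
      = (LINT x|lborel. LINT s|lborel. H x s)"
  proof (rule Bochner_Integration.integral_cong[OF refl])
    fix x
    show "of_real (poisson_kernel q x) * exp (- \<i> * of_real (k * x)) * of_real (exp (- \<epsilon> * \<bar>x\<bar>))
        = (LINT s|lborel. H x s)"
      unfolding H_x integral_mult_left_zero integral_exp_neg_abs_cis[OF q] by simp
  qed
  also have "\<dots> = (LINT s|lborel. LINT x|lborel. H x s)"
    using H_integrable by (intro lborel_pair.Fubini_integral[symmetric]) simp
  also have "\<dots> = (LINT s|lborel. of_real (exp (- q * \<bar>s\<bar>) * poisson_kernel \<epsilon> (s - k)))"
    unfolding H_s integral_mult_right_zero integral_exp_neg_abs_cis[OF \<epsilon>] by simp
  also have "\<dots> = of_real (LINT s|lborel. exp (- q * \<bar>s\<bar>) * poisson_kernel \<epsilon> (s - k))"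
    by (rule integral_complex_of_real)
  also have "(LINT s|lborel. exp (- q * \<bar>s\<bar>) * poisson_kernel \<epsilon> (s - k))
      = \<epsilon> * (LINT u|lborel. exp (- q * \<bar>k + \<epsilon> * u\<bar>) * poisson_kernel \<epsilon> (\<epsilon> * u))"
    using \<epsilon> lborel_integral_real_affine[of \<epsilon> "\<lambda>s. exp (- q * \<bar>s\<bar>) * poisson_kernel \<epsilon> (s - k)" k]
    by simp
  also have "\<dots> = (LINT u|lborel. exp (- q * \<bar>k + \<epsilon> * u\<bar>) * inverse (1 + u\<^sup>2))"
    using \<epsilon> by (simp add: poisson_kernel_scaled)
  finally show ?thesis .
qed

lemma tendsto_integral_exp_damping:
  fixes f :: "real \<Rightarrow> complex"
  assumes f: "integrable lborel f" and \<epsilon>: "\<epsilon> \<longlonglongrightarrow> 0" "\<And>n. \<epsilon> n \<ge> 0"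
  shows "(\<lambda>n. LINT x|lborel. f x * of_real (exp (- \<epsilon> n * \<bar>x\<bar>))) \<longlonglongrightarrow> (LINT x|lborel. f x)"
proof (rule integral_dominated_convergence[where w = "\<lambda>x. norm (f x)"])
  have [measurable]: "f \<in> borel_measurable borel"
    using borel_measurable_integrable[OF f] by simp
  show "f \<in> borel_measurable lborel" and "(\<lambda>x. f x * of_real (exp (- \<epsilon> n * \<bar>x\<bar>))) \<in> borel_measurable lborel"
    for n by measurable
  show "integrable lborel (\<lambda>x. norm (f x))"
    using f by simp
  show "AE x in lborel. (\<lambda>n. f x * of_real (exp (- \<epsilon> n * \<bar>x\<bar>))) \<longlonglongrightarrow> f x"
  proof (rule AE_I2)
    fix x
    have "(\<lambda>n. f x * of_real (exp (- \<epsilon> n * \<bar>x\<bar>))) \<longlonglongrightarrow> f x * of_real (exp (- 0 * \<bar>x\<bar>))"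
      by (intro tendsto_intros \<epsilon>(1))
    then show "(\<lambda>n. f x * of_real (exp (- \<epsilon> n * \<bar>x\<bar>))) \<longlonglongrightarrow> f x"
      by simp
  qed
  show "AE x in lborel. norm (f x * of_real (exp (- \<epsilon> n * \<bar>x\<bar>))) \<le> norm (f x)" for n
  proof (rule AE_I2)
    fix x
    have damping_le_1: "exp (- \<epsilon> n * \<bar>x\<bar>) \<le> 1"
      using \<epsilon>(2)[of n] by (simp add: mult_nonneg_nonneg)
    show "norm (f x * of_real (exp (- \<epsilon> n * \<bar>x\<bar>))) \<le> norm (f x)"
      using mult_left_le_one_le[OF norm_ge_zero[of "f x"] _ damping_le_1] by (simp add: norm_mult mult.commute)
  qed
qed

lemma tendsto_integral_rescaled_inverse_1_plus_square:
  fixes g :: "real \<Rightarrow> real"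
  assumes g: "continuous_on UNIV g" "\<And>x. \<bar>g x\<bar> \<le> B" and \<epsilon>: "\<epsilon> \<longlonglongrightarrow> 0"
  shows "(\<lambda>n. LINT u|lborel. g (k + \<epsilon> n * u) * inverse (1 + u\<^sup>2)) \<longlonglongrightarrow> pi * g k"
proof -
  have [measurable]: "g \<in> borel_measurable borel"
    using g(1) by (rule borel_measurable_continuous_onI)
  have "(\<lambda>n. LINT u|lborel. g (k + \<epsilon> n * u) * inverse (1 + u\<^sup>2))
    \<longlonglongrightarrow> (LINT u|lborel. g k * inverse (1 + u\<^sup>2))"
  proof (rule integral_dominated_convergence[where w = "\<lambda>u. B * inverse (1 + u\<^sup>2)"])
    show "AE u in lborel. (\<lambda>n. g (k + \<epsilon> n * u) * inverse (1 + u\<^sup>2)) \<longlonglongrightarrow> g k * inverse (1 + u\<^sup>2)"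
    proof (rule AE_I2)
      fix u
      have "(\<lambda>n. k + \<epsilon> n * u) \<longlonglongrightarrow> k + 0 * u"
        by (intro tendsto_intros \<epsilon>)
      then have "(\<lambda>n. g (k + \<epsilon> n * u)) \<longlonglongrightarrow> g k"
        using g(1) by (auto simp: continuous_on_eq_continuous_at intro: isCont_tendsto_compose)
      then show "(\<lambda>n. g (k + \<epsilon> n * u) * inverse (1 + u\<^sup>2)) \<longlonglongrightarrow> g k * inverse (1 + u\<^sup>2)"
        by (intro tendsto_intros)
    qed
    show "AE u in lborel. norm (g (k + \<epsilon> n * u) * inverse (1 + u\<^sup>2)) \<le> B * inverse (1 + u\<^sup>2)" for n
      using g(2) by (intro AE_I2) (simp add: abs_mult add_pos_nonneg mult_right_mono)
  qed (simp_all add: lborel_integrable_inverse_1_plus_square)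
  then show ?thesis
    by (simp add: lborel_integral_inverse_1_plus_square mult.commute)
qed

lemma Fourier_integral_poisson_kernel:
  fixes q k :: real assumes q: "q > 0"
  shows "(LINT x|lborel. of_real (poisson_kernel q x) * exp (- \<i> * of_real (k * x)))
    = of_real (pi * exp (- q * \<bar>k\<bar>))"
proof -
  define \<epsilon> where "\<epsilon> n = 1 / real (Suc n)" for n
  have \<epsilon>_pos: "\<epsilon> n > 0" for n by (simp add: \<epsilon>_def)
  have \<epsilon>_lim: "\<epsilon> \<longlonglongrightarrow> 0" unfolding \<epsilon>_def by (rule LIMSEQ_Suc[OF lim_const_over_n])
  have "integrable lborel (\<lambda>x. of_real (poisson_kernel q x) * exp (- \<i> * of_real (k * x)))"
  proof (rule Bochner_Integration.integrable_bound)
    show "integrable lborel (poisson_kernel q)"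
      using integrable_poisson_kernel_shift[OF q, of 0] by simp
  qed (use poisson_kernel_pos[OF q] in \<open>auto simp: norm_mult\<close>)
  then have "(\<lambda>n. LINT x|lborel. of_real (poisson_kernel q x) * exp (- \<i> * of_real (k * x))
      * of_real (exp (- \<epsilon> n * \<bar>x\<bar>)))
    \<longlonglongrightarrow> (LINT x|lborel. of_real (poisson_kernel q x) * exp (- \<i> * of_real (k * x)))"
    using \<epsilon>_lim \<epsilon>_pos by (intro tendsto_integral_exp_damping) (auto intro: less_imp_le)
  moreover have "(\<lambda>n. LINT x|lborel. of_real (poisson_kernel q x) * exp (- \<i> * of_real (k * x))
      * of_real (exp (- \<epsilon> n * \<bar>x\<bar>)))
    \<longlonglongrightarrow> of_real (pi * exp (- q * \<bar>k\<bar>))"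
    unfolding Fourier_integral_poisson_kernel_damped[OF q \<epsilon>_pos] using q \<epsilon>_lim
    by (intro tendsto_of_real tendsto_integral_rescaled_inverse_1_plus_square[where B = 1])
       (auto intro!: continuous_intros)
  ultimately show ?thesis
    by (rule LIMSEQ_unique)
qed

lemma Fourier_integral_poisson_kernel_shift:
  fixes q k t :: real assumes "q > 0"
  shows "(LINT y|lborel. of_real (poisson_kernel q (y - t)) * exp (- \<i> * of_real (k * y)))
    = exp (- \<i> * of_real (k * t)) * of_real (pi * exp (- q * \<bar>k\<bar>))"
proof -
  have "(LINT y|lborel. of_real (poisson_kernel q (y - t)) * exp (- \<i> * of_real (k * y)))
      = (LINT u|lborel. exp (- \<i> * of_real (k * t)) * (of_real (poisson_kernel q u) * exp (- \<i> * of_real (k * u))))"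
    using lborel_integral_real_affine[of 1 "\<lambda>y. of_real (poisson_kernel q (y - t)) * exp (- \<i> * of_real (k * y))" t]
    by (simp add: algebra_simps flip: exp_add)
  also have "\<dots> = exp (- \<i> * of_real (k * t)) * of_real (pi * exp (- q * \<bar>k\<bar>))"
    unfolding integral_mult_right_zero Fourier_integral_poisson_kernel[OF assms] ..
  finally show ?thesis .
qed

section \<open>Convolution with the Poisson kernel\<close>

lemma fourier_mult_left: "fourier (\<lambda>y. c * f y) k = c * fourier f k"
  by (simp add: fourier_def mult.assoc mult.left_commute)

definition poisson_smoothing :: "real \<Rightarrow> (real \<Rightarrow> complex) \<Rightarrow> real \<Rightarrow> complex" where
  "poisson_smoothing q g y = (LINT t|lborel. of_real (poisson_kernel q (y - t)) * g t)"

lemma integrable_poisson_convolution_integrand: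
  fixes g h :: "real \<Rightarrow> complex"
  assumes q: "q > 0" and g: "integrable lborel g"
    and h: "h \<in> borel_measurable borel" "\<And>y. norm (h y) \<le> 1"
  shows "integrable (lborel \<Otimes>\<^sub>M lborel) (\<lambda>(y, t). of_real (poisson_kernel q (y - t)) * g t * h y)"
proof (rule Bochner_Integration.integrable_bound)
  have [measurable]: "g \<in> borel_measurable borel" "h \<in> borel_measurable borel"
    using borel_measurable_integrable[OF g] h(1) by simp_all
  have inner_integral: "(LINT y|lborel. norm (poisson_kernel q (y - t) * norm (g t))) = pi * norm (g t)" for t
    by (simp add: abs_mult abs_of_nonneg less_imp_le[OF poisson_kernel_pos[OF q]]
        integral_poisson_kernel_shift[OF q])
  have "integrable (lborel \<Otimes>\<^sub>M lborel) (\<lambda>(t, y). poisson_kernel q (y - t) * norm (g t))"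
  proof (rule lborel_pair.Fubini_integrable)
    show "(\<lambda>(t, y). poisson_kernel q (y - t) * norm (g t)) \<in> borel_measurable (lborel \<Otimes>\<^sub>M lborel)"
      by measurable
    show "integrable lborel (\<lambda>t. LINT y|lborel. norm (case (t, y) of (t, y) \<Rightarrow> poisson_kernel q (y - t) * norm (g t)))"
      using g by (simp only: case_prod_conv inner_integral) simp
    show "AE t in lborel. integrable lborel (\<lambda>y. case (t, y) of (t, y) \<Rightarrow> poisson_kernel q (y - t) * norm (g t))"
      using integrable_poisson_kernel_shift[OF q] by simp
  qed
  from lborel_pair.integrable_product_swap[OF this]
  show "integrable (lborel \<Otimes>\<^sub>M lborel) (\<lambda>(y, t). poisson_kernel q (y - t) * norm (g t))"
    by simp
  show "(\<lambda>(y, t). of_real (poisson_kernel q (y - t)) * g t * h y) \<in> borel_measurable (lborel \<Otimes>\<^sub>M lborel)"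
    by measurable
  show "AE p in lborel \<Otimes>\<^sub>M lborel. norm (case p of (y, t) \<Rightarrow> of_real (poisson_kernel q (y - t)) * g t * h y)
      \<le> norm (case p of (y, t) \<Rightarrow> poisson_kernel q (y - t) * norm (g t))"
  proof (rule AE_I2)
    fix p :: "real \<times> real"
    obtain y t where p: "p = (y, t)" by fastforce
    have "norm (of_real (poisson_kernel q (y - t)) * g t * h y) \<le> poisson_kernel q (y - t) * norm (g t)"
      using mult_left_le[OF h(2)[of y], of "poisson_kernel q (y - t) * norm (g t)"]
        poisson_kernel_pos[OF q, of "y - t"]
      by (simp add: norm_mult)
    then show "norm (case p of (y, t) \<Rightarrow> of_real (poisson_kernel q (y - t)) * g t * h y)
        \<le> norm (case p of (y, t) \<Rightarrow> poisson_kernel q (y - t) * norm (g t))"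
      using poisson_kernel_pos[OF q, of "y - t"] by (simp add: p)
  qed
qed

lemma fourier_poisson_smoothing:
  fixes q k :: real and g :: "real \<Rightarrow> complex"
  assumes q: "q > 0" and g: "integrable lborel g"
  shows "fourier (poisson_smoothing q g) k = of_real (pi * exp (- q * \<bar>k\<bar>)) * fourier g k"
proof -
  define G where "G y t = of_real (poisson_kernel q (y - t)) * g t * exp (- \<i> * of_real (k * y))" for y t
  have G_integrable: "integrable (lborel \<Otimes>\<^sub>M lborel) (\<lambda>(y, t). G y t)"
    unfolding G_def using q g by (rule integrable_poisson_convolution_integrand) simp_all
  have "(LINT y|lborel. poisson_smoothing q g y * exp (- \<i> * of_real (k * y)))
      = (LINT y|lborel. LINT t|lborel. G y t)"
    by (simp add: poisson_smoothing_def G_def)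
  also have "\<dots> = (LINT t|lborel. LINT y|lborel. G y t)"
    using G_integrable by (intro lborel_pair.Fubini_integral[symmetric]) simp
  also have "\<dots> = (LINT t|lborel. of_real (pi * exp (- q * \<bar>k\<bar>)) * (g t * exp (- \<i> * of_real (k * t))))"
  proof (rule Bochner_Integration.integral_cong[OF refl])
    fix t
    have "(LINT y|lborel. G y t)
        = g t * (LINT y|lborel. of_real (poisson_kernel q (y - t)) * exp (- \<i> * of_real (k * y)))"
      by (simp add: G_def mult_ac)
    also have "\<dots> = g t * (exp (- \<i> * of_real (k * t)) * of_real (pi * exp (- q * \<bar>k\<bar>)))"
      unfolding Fourier_integral_poisson_kernel_shift[OF q] ..
    finally show "(LINT y|lborel. G y t) = of_real (pi * exp (- q * \<bar>k\<bar>)) * (g t * exp (- \<i> * of_real (k * t)))"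
      by (simp only: mult_ac)
  qed
  finally show ?thesis
    by (simp add: fourier_def)
qed

section \<open>The Neumann-Poincare operator in the coordinates of Psi\<close>

lemma Im_inverse_Psi: "Im (inverse (Psi x t)) = t"
  by (simp add: Psi_def)

lemma norm_of_real_minus_Psi_sq:
  "(cmod (of_real a - Psi c t))\<^sup>2 = a\<^sup>2 - (2 * a * c - 1) / (c\<^sup>2 + t\<^sup>2)"
proof -
  have "(cmod (of_real a - Psi c t))\<^sup>2 = a\<^sup>2 - 2 * a * Re (Psi c t) + (cmod (Psi c t))\<^sup>2"
    by (simp only: cmod_power2) (simp add: power2_eq_square algebra_simps)
  also have "Re (Psi c t) = c / (c\<^sup>2 + t\<^sup>2)"
    by (simp add: Psi_def power2_eq_square)
  also have "(cmod (Psi c t))\<^sup>2 = 1 / (c\<^sup>2 + t\<^sup>2)"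
    by (simp add: Psi_def norm_inverse power_inverse cmod_power2 divide_inverse)
  finally show ?thesis
    by (simp add: diff_divide_distrib)
qed

lemma Psi_in_circ:
  fixes a t :: real assumes "a > 0"
  shows "Psi (1 / (2 * a)) t \<in> circ a - {0}"
proof -
  have "(cmod (of_real a - Psi (1 / (2 * a)) t))\<^sup>2 = a\<^sup>2"
    using assms by (simp add: norm_of_real_minus_Psi_sq)
  then have "cmod (of_real a - Psi (1 / (2 * a)) t) = a"
    using assms by (simp add: power2_eq_iff_nonneg)
  moreover have "Psi (1 / (2 * a)) t \<noteq> 0"
    using assms by (simp add: Psi_def complex_eq_iff)
  ultimately show ?thesis
    using assms by (simp add: circ_def dist_norm)
qed

lemma Psi_inner_notin_circ_outer:
  fixes r R t :: real assumes "0 < r" and "r < R"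
  shows "Psi (1 / (2 * r)) t \<notin> circ R"
proof
  define c where "c = 1 / (2 * r)"
  assume "Psi (1 / (2 * r)) t \<in> circ R"
  then have "(cmod (of_real R - Psi c t))\<^sup>2 = R\<^sup>2"
    using assms by (simp add: circ_def dist_norm c_def)
  then have "(2 * R * c - 1) / (c\<^sup>2 + t\<^sup>2) = 0"
    by (simp add: norm_of_real_minus_Psi_sq)
  moreover have "2 * R * c - 1 > 0"
    using assms by (simp add: c_def field_simps)
  moreover have "c\<^sup>2 + t\<^sup>2 > 0"
    using assms by (simp add: c_def add_pos_nonneg)
  ultimately show False
    by simp
qed

lemma hfun_eq_poisson_kernel: "a > 0 \<Longrightarrow> hfun a t = 2 * a * poisson_kernel (1 / (2 * a)) t"
  by (simp add: hfun_def poisson_kernel_def power_int_minus power_one_over inverse_eq_divide)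

lemma hfun_pos: "a > 0 \<Longrightarrow> hfun a t > 0"
  by (simp add: hfun_eq_poisson_kernel poisson_kernel_pos)

lemma integrable_hfun: "a > 0 \<Longrightarrow> integrable lborel (hfun a)"
proof -
  assume "a > 0"
  then have "hfun a = (\<lambda>t. 2 * a * poisson_kernel (1 / (2 * a)) t)"
    by (simp add: hfun_eq_poisson_kernel fun_eq_iff)
  then show ?thesis
    using integrable_poisson_kernel_shift[of "1 / (2 * a)" 0] \<open>a > 0\<close> by simp
qed

definition weighted_pull :: "real \<Rightarrow> (complex \<Rightarrow> complex) \<Rightarrow> real \<Rightarrow> complex" where
  "weighted_pull a \<phi> t = of_real (hfun a t) * pull a \<phi> t"

lemma integrable_weighted_pull:
  assumes a: "a > 0" and measurable: "pull a \<phi> \<in> borel_measurable lborel"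
    and square_integrable: "integrable lborel (\<lambda>t. (cmod (pull a \<phi> t))\<^sup>2 * hfun a t)"
  shows "integrable lborel (weighted_pull a \<phi>)"
proof (rule Bochner_Integration.integrable_bound)
  show "integrable lborel (\<lambda>t. ((cmod (pull a \<phi> t))\<^sup>2 * hfun a t + hfun a t) / 2)"
    using square_integrable integrable_hfun[OF a] by simp
  show "weighted_pull a \<phi> \<in> borel_measurable lborel"
    using measurable borel_measurable_integrable[OF integrable_hfun[OF a]]
    unfolding weighted_pull_def by measurable
  \<comment> \<open>\<open>2 |\<phi>| \<le> |\<phi>|\<^sup>2 + 1\<close>\<close>
  have "norm (weighted_pull a \<phi> t) \<le> ((cmod (pull a \<phi> t))\<^sup>2 * hfun a t + hfun a t) / 2" for t
    using mult_right_mono[OF zero_le_power2[of "cmod (pull a \<phi> t) - 1"] less_imp_le[OF hfun_pos[OF a]]]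
      hfun_pos[OF a, of t]
    by (simp add: weighted_pull_def norm_mult power2_eq_square algebra_simps)
  then show "AE t in lborel. norm (weighted_pull a \<phi> t)
      \<le> norm (((cmod (pull a \<phi> t))\<^sup>2 * hfun a t + hfun a t) / 2)"
    by (intro AE_I2) (metis abs_ge_self order_trans real_norm_def)
qed

lemma weighted_pull_Kstar_outer:
  assumes "0 < r" and "r < R" and "bdry_int R r \<phi> = 0"
  shows "weighted_pull R (Kstar R r \<phi>)
    = (\<lambda>y. of_real (1 / (2 * pi)) * poisson_smoothing (1 / (2 * r) - 1 / (2 * R)) (weighted_pull r \<phi>) y)"
proof (rule ext)
  fix y
  define q where "q = 1 / (2 * r) - 1 / (2 * R)"
  have R: "R > 0" using assms by simp
  have "Psi (1 / (2 * R)) y \<in> circ R - {0}"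
    using R by (rule Psi_in_circ)
  then have "pull R (Kstar R r \<phi>) y = of_real (1 / (2 * pi * hfun R y))
      * (LINT t|lborel. of_real (q / (q\<^sup>2 + (y - t)\<^sup>2)) * pull r \<phi> t * of_real (hfun r t))"
    unfolding pull_def[of R "Kstar R r \<phi>"] Kstar_def Let_def q_def
    using assms(3) by (simp only: Im_inverse_Psi if_True mult_zero_right add_0)
  moreover have "hfun R y \<noteq> 0"
    using hfun_pos[OF R, of y] by simp
  ultimately show "weighted_pull R (Kstar R r \<phi>) y
      = of_real (1 / (2 * pi)) * poisson_smoothing (1 / (2 * r) - 1 / (2 * R)) (weighted_pull r \<phi>) y"
    by (simp add: weighted_pull_def poisson_smoothing_def poisson_kernel_def q_def mult_ac)
qed

lemma weighted_pull_Kstar_inner: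
  assumes "0 < r" and "r < R" and "bdry_int R r \<phi> = 0"
  shows "weighted_pull r (Kstar R r \<phi>)
    = (\<lambda>y. of_real (1 / (2 * pi)) * poisson_smoothing (1 / (2 * r) - 1 / (2 * R)) (weighted_pull R \<phi>) y)"
proof (rule ext)
  fix y
  define q where "q = 1 / (2 * r) - 1 / (2 * R)"
  have "Psi (1 / (2 * r)) y \<in> circ r - {0}"
    using assms(1) by (rule Psi_in_circ)
  moreover have "Psi (1 / (2 * r)) y \<notin> circ R - {0}"
    using Psi_inner_notin_circ_outer[OF assms(1,2)] by simp
  ultimately have "pull r (Kstar R r \<phi>) y = of_real (1 / (2 * pi * hfun r y))
      * (LINT t|lborel. of_real (q / (q\<^sup>2 + (y - t)\<^sup>2)) * pull R \<phi> t * of_real (hfun R t))"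
    unfolding pull_def[of r "Kstar R r \<phi>"] Kstar_def Let_def q_def
    using assms(3) by (simp only: Im_inverse_Psi if_True if_False mult_zero_right add_0 minus_zero)
  moreover have "hfun r y \<noteq> 0"
    using hfun_pos[OF assms(1), of y] by simp
  ultimately show "weighted_pull r (Kstar R r \<phi>) y
      = of_real (1 / (2 * pi)) * poisson_smoothing (1 / (2 * r) - 1 / (2 * R)) (weighted_pull R \<phi>) y"
    by (simp add: weighted_pull_def poisson_smoothing_def poisson_kernel_def q_def mult_ac)
qed

lemma Pmat_swap_eq_Jmat_Pmat:
  fixes A B c :: complex
  shows "Pmat *v vector [c * B, c * A] = c *s (Jmat ** Pmat *v vector [A, B])"
  by (simp add: vec_eq_iff forall_2 Pmat_def Jmat_def matrix_vector_mult_def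
      matrix_matrix_mult_def sum_2 algebra_simps)

lemma Uop_eq_weighted_pull: "Uop R r \<phi> k = vector [fourier (weighted_pull R \<phi>) k, fourier (weighted_pull r \<phi>) k]"
  by (simp add: Uop_def weighted_pull_def[abs_def])

lemma fourier_normalized_poisson_smoothing:
  assumes "q > 0" and "integrable lborel g"
  shows "fourier (\<lambda>y. of_real (1 / (2 * pi)) * poisson_smoothing q g y) k
    = of_real (1 / 2 * exp (- \<bar>k\<bar> * q)) * fourier g k"
proof -
  have "1 / (2 * pi) * (pi * exp (- q * \<bar>k\<bar>)) = 1 / 2 * exp (- \<bar>k\<bar> * q)"
    by (simp add: mult.commute)
  then show ?thesis
    unfolding fourier_mult_left fourier_poisson_smoothing[OF assms]
    by (simp only: mult.assoc[symmetric] of_real_mult[symmetric])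
qed

theorem lemma3p2:
  fixes R r :: real and \<phi> :: "complex \<Rightarrow> complex"
  assumes "0 < r" and "r < R"
    and "L2_0_bdry R r \<phi>"
  shows "AE k in lborel.
           Pmat *v Uop R r (Kstar R r \<phi>) k =
           (complex_of_real (1 / 2 * exp (- \<bar>k\<bar> * (1 / (2 * r) - 1 / (2 * R))))) *s
             (Jmat ** Pmat *v Uop R r \<phi> k)"
proof (rule AE_I2)
  fix k
  have R: "R > 0" and q: "1 / (2 * r) - 1 / (2 * R) > 0"
    using assms(1,2) by (simp_all add: field_simps)
  have int_R: "integrable lborel (weighted_pull R \<phi>)" and int_r: "integrable lborel (weighted_pull r \<phi>)"
    and mean_zero: "bdry_int R r \<phi> = 0"
    using assms integrable_weighted_pull[OF R] integrable_weighted_pull[of r]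
    by (auto simp: L2_0_bdry_def L2_bdry_def)
  show "Pmat *v Uop R r (Kstar R r \<phi>) k =
      (complex_of_real (1 / 2 * exp (- \<bar>k\<bar> * (1 / (2 * r) - 1 / (2 * R))))) *s
        (Jmat ** Pmat *v Uop R r \<phi> k)"
    unfolding Uop_eq_weighted_pull weighted_pull_Kstar_outer[OF assms(1,2) mean_zero]
      weighted_pull_Kstar_inner[OF assms(1,2) mean_zero]
      fourier_normalized_poisson_smoothing[OF q int_R] fourier_normalized_poisson_smoothing[OF q int_r]
    by (simp only: Pmat_swap_eq_Jmat_Pmat)
qed

end
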